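(* Let $\Omega\subset\mathbb{R}^N$ be a bounded open connected set and let $w\in\mathrm{USC}(\overline{\Omega})$ be $\tilde{\mathcal{Q}}$-subharmonic in $\Omega$. If $w\le 0$ on $\partial\Omega$, then $w\le 0$ on $\Omega$.
   Context: $\mathcal{S}(N)$ is the space of real symmetric $N\times N$ matrices, $\lambda_N(A)$ the largest eigenvalue of $A$. $\tilde{\mathcal{Q}}:=\{(r,A)\in\mathbb{R}\times\mathcal{S}(N): r\le 0\text{ or }\lambda_N(A)\ge 0\}$. For $w$ defined near $x_0$, $J^+_{x_0}w:=\{(\varphi(x_0),D^2\varphi(x_0)):\varphi$ is $C^2$ near $x_0$, $w\le\varphi$ near $x_0$, $w(x_0)=\varphi(x_0)\}$. A function $w\in\mathrm{USC}(\Omega)$ (upper semicontinuous with values in $[-\infty,\infty)$) is $\tilde{\mathcal{Q}}$-subharmonic in $\Omega$ if $J^+_{x_0}w\subset\tilde{\mathcal{Q}}$ for every $x_0\in\Omega$. *)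

theory Defs
  imports "HOL-Analysis.Analysis" "HOL-Library.Extended_Real"
begin

text \<open>Points of R^N are vectors of type real^'n (N = CARD('n)); symmetric
  N x N matrices are elements of real^'n^'n with transpose A = A.\<close>

definition sym_mat :: "real^'n^'n \<Rightarrow> bool" where
  "sym_mat A \<longleftrightarrow> transpose A = A"

definition lambda_max :: "real^'n^'n \<Rightarrow> real" where
  "lambda_max A = Max {mu. \<exists>v. v \<noteq> 0 \<and> A *v v = mu *\<^sub>R v}"

definition Qtilde :: "(real \<times> (real^'n^'n)) set" where
  "Qtilde = {(r, A). sym_mat A \<and> (r \<le> 0 \<or> lambda_max A \<ge> 0)}"

definition C2_near_with_hessian :: "(real^'n \<Rightarrow> real) \<Rightarrow> real^'n \<Rightarrow> real^'n^'n \<Rightarrow> bool" where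
  "C2_near_with_hessian phi x0 A \<longleftrightarrow>
     (\<exists>U g H. open U \<and> x0 \<in> U \<and>
        (\<forall>x\<in>U. (phi has_derivative (\<lambda>h. g x \<bullet> h)) (at x)) \<and>
        (\<forall>x\<in>U. (g has_derivative (\<lambda>h. H x *v h)) (at x)) \<and>
        continuous_on U H \<and> A = H x0)"

definition Jplus :: "(real^'n \<Rightarrow> ereal) \<Rightarrow> real^'n \<Rightarrow> (real \<times> (real^'n^'n)) set" where
  "Jplus w x0 = {(r, A). \<exists>phi. C2_near_with_hessian phi x0 A \<and>
       (\<exists>e>0. \<forall>y\<in>ball x0 e. w y \<le> ereal (phi y)) \<and>
       w x0 = ereal (phi x0) \<and> r = phi x0}"

definition usc_on :: "'a::topological_space set \<Rightarrow> ('a \<Rightarrow> ereal) \<Rightarrow> bool" where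
  "usc_on S w \<longleftrightarrow> (\<forall>x\<in>S. w x \<noteq> \<infinity> \<and>
      (\<forall>c. w x < c \<longrightarrow> eventually (\<lambda>y. w y < c) (at x within S)))"

definition Qtilde_subharmonic :: "(real^'n) set \<Rightarrow> (real^'n \<Rightarrow> ereal) \<Rightarrow> bool" where
  "Qtilde_subharmonic \<Omega> w \<longleftrightarrow> (\<forall>x0\<in>\<Omega>. Jplus w x0 \<subseteq> Qtilde)"

end

theory Submission
  imports Defs
begin

(* Suppose w x1 = m > 0. Choose eps > 0 with eps |y - x1|^2 < m on the closure of Omega. The
   perturbation u = w + eps |y - x1|^2 is still upper semicontinuous, so it attains its maximum over
   the compact closure at some x0, and u x0 >= u x1 = m. Wherever w <= 0, in particular on the
   boundary, u < m; hence x0 is interior and the concave paraboloid u x0 - eps |y - x1|^2 touches w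
   from above at x0. Its Hessian -2 eps I has no nonnegative eigenvalue, so subharmonicity forces
   w x0 <= 0, i.e. u x0 < m: a contradiction. *)

lemma matrix_vector_mult_mat: "(mat k :: real^'n^'n) *v v = k *\<^sub>R v"
proof -
  have "(\<Sum>j\<in>UNIV. (if i = j then k else 0) * v $ j) = k * v $ i" for i
    by (simp add: if_distrib[of "\<lambda>a. a * v $ _"] cong: if_cong)
  then show ?thesis by (simp add: vec_eq_iff matrix_vector_mult_def mat_def)
qed

lemma lambda_max_mat: "lambda_max (mat k :: real^'n^'n) = k"
proof -
  have "{mu. \<exists>v. v \<noteq> 0 \<and> (mat k :: real^'n^'n) *v v = mu *\<^sub>R v} = {k}"
    by (auto simp: matrix_vector_mult_mat intro: exI[of _ "axis undefined 1"])
  then show ?thesis unfolding lambda_max_def by simp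
qed

lemma usc_on_openin_sublevel:
  assumes "usc_on S u"
  shows "openin (top_of_set S) {x\<in>S. u x < c}"
  unfolding openin_subopen[of _ "{x\<in>S. u x < c}"]
proof (intro ballI)
  fix x assume "x \<in> {x\<in>S. u x < c}"
  then have "eventually (\<lambda>y. u y < c) (at x within S)" and "u x < c" "x \<in> S"
    using assms unfolding usc_on_def by auto
  then obtain T where "open T" "x \<in> T" "\<forall>y\<in>T. y \<in> S \<longrightarrow> y \<noteq> x \<longrightarrow> u y < c"
    unfolding eventually_at_topological by auto
  then show "\<exists>T'. openin (top_of_set S) T' \<and> x \<in> T' \<and> T' \<subseteq> {x\<in>S. u x < c}"
    using \<open>u x < c\<close> \<open>x \<in> S\<close> by (intro exI[of _ "S \<inter> T"]) (auto simp: openin_open_Int)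
qed

lemma usc_on_attains_max:
  assumes "usc_on S u" "compact S" "S \<noteq> {}"
  shows "\<exists>x\<in>S. \<forall>y\<in>S. u y \<le> u x"
proof (rule ccontr)
  assume no_max: "\<not> ?thesis"
  have compact: "compactin (top_of_set S) S"
    using assms(2) by (simp add: compactin_subtopology)
  have S_cover: "S \<subseteq> \<Union>((\<lambda>y. {x\<in>S. u x < u y}) ` S)"
    using no_max by (auto simp: not_le)
  have "\<exists>\<F>. finite \<F> \<and> \<F> \<subseteq> (\<lambda>y. {x\<in>S. u x < u y}) ` S \<and> S \<subseteq> \<Union>\<F>"
    by (rule compactinD[OF compact _ S_cover]) (auto simp: usc_on_openin_sublevel[OF assms(1)])
  then obtain Y where Y: "finite Y" "Y \<subseteq> S" and cover: "S \<subseteq> (\<Union>y\<in>Y. {x\<in>S. u x < u y})"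
    unfolding ex_finite_subset_image by blast
  then have "u ` Y \<noteq> {}" using assms(3) by auto
  then have "Max (u ` Y) \<in> u ` Y" using Y(1) by (intro Max_in) auto
  then obtain y where "y \<in> Y" and y_max: "u y = Max (u ` Y)" by auto
  then obtain y' where "y' \<in> Y" "u y < u y'" using Y(2) cover by blast
  moreover have "u y' \<le> u y" using y_max Y(1) \<open>y' \<in> Y\<close> by simp
  ultimately show False by simp
qed

lemma usc_on_add_continuous:
  assumes "usc_on S w" "continuous_on S f"
  shows "usc_on S (\<lambda>y. w y + ereal (f y))"
  unfolding usc_on_def
proof (intro ballI conjI allI impI)
  fix x c assume "x \<in> S"
  then have "w x \<noteq> \<infinity>" and w_usc: "\<And>c. w x < c \<Longrightarrow> eventually (\<lambda>y. w y < c) (at x within S)"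
    using assms(1) unfolding usc_on_def by auto
  then show "w x + ereal (f x) \<noteq> \<infinity>" by simp
  assume "w x + ereal (f x) < c"
  then obtain t where t: "w x < ereal t" "ereal t + ereal (f x) < c"
    using ereal_dense2[of "w x" "c - ereal (f x)"] by (auto simp: ereal_less_minus)
  then obtain s where s: "f x < s" "ereal t + ereal s < c"
    using ereal_dense2[of "ereal (f x)" "c - ereal t"] by (auto simp: ereal_less_minus add.commute)
  have "eventually (\<lambda>y. w y < ereal t) (at x within S)"
    using w_usc t(1) .
  moreover have "eventually (\<lambda>y. f y < s) (at x within S)"
    using assms(2) \<open>x \<in> S\<close> s(1) by (auto simp: continuous_on_def intro: order_tendstoD)
  ultimately show "eventually (\<lambda>y. w y + ereal (f y) < c) (at x within S)"
  proof eventually_elim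
    case (elim y)
    then have "w y + ereal (f y) < ereal t + ereal s"
      by (intro ereal_add_strict_mono2) auto
    with s(2) show ?case by order
  qed
qed

lemma bounded_imp_scaled_norm_sq_less:
  fixes S :: "'a::real_normed_vector set"
  assumes "bounded S" "m > 0"
  shows "\<exists>eps>0. \<forall>y\<in>S. eps * norm (y - p)^2 < m"
proof -
  obtain B where "B > 0" and B: "\<forall>y\<in>S. norm (y - p) \<le> B"
    using bounded_translation_minus[OF assms(1), of p] unfolding bounded_pos by auto
  have "B^2 + 1 > 0" by (intro add_nonneg_pos) auto
  define eps where "eps = m / (B^2 + 1)"
  have "eps > 0" using assms(2) \<open>B^2 + 1 > 0\<close> by (simp add: eps_def)
  moreover have "eps * norm (y - p)^2 < m" if "y \<in> S" for y
  proof -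
    have "eps * norm (y - p)^2 \<le> eps * B^2"
      using B that \<open>eps > 0\<close> by (intro mult_left_mono power_mono) auto
    also have "\<dots> < eps * (B^2 + 1)" using \<open>eps > 0\<close> by simp
    also have "\<dots> = m" using \<open>B^2 + 1 > 0\<close> by (simp add: eps_def)
    finally show ?thesis .
  qed
  ultimately show ?thesis by blast
qed

lemma C2_near_with_hessian_concave_paraboloid:
  "C2_near_with_hessian (\<lambda>y. c - eps * norm (y - p)^2) x0 (mat (-2 * eps))"
proof -
  have grad: "((\<lambda>y. c - eps * norm (y - p)^2) has_derivative (\<lambda>h. ((-2 * eps) *\<^sub>R (x - p)) \<bullet> h)) (at x)"
    for x
  proof -
    have "((\<lambda>y. c - eps * ((y - p) \<bullet> (y - p)))
            has_derivative (\<lambda>h. 0 - eps * ((x - p) \<bullet> (h - 0) + (h - 0) \<bullet> (x - p)))) (at x)"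
      by (intro has_derivative_diff has_derivative_const has_derivative_mult_right has_derivative_inner
          has_derivative_ident)
    moreover have "(\<lambda>h. 0 - eps * ((x - p) \<bullet> (h - 0) + (h - 0) \<bullet> (x - p)))
                     = (\<lambda>h. ((-2 * eps) *\<^sub>R (x - p)) \<bullet> h)"
      by (simp add: fun_eq_iff inner_commute[of _ "x - p"])
    ultimately show ?thesis by (simp add: power2_norm_eq_inner)
  qed
  have hess: "((\<lambda>y. (-2 * eps) *\<^sub>R (y - p)) has_derivative (\<lambda>h. mat (-2 * eps) *v h)) (at x)" for x
    unfolding matrix_vector_mult_mat
    using has_derivative_scaleR_right[OF has_derivative_diff[OF has_derivative_ident has_derivative_const]]
    by (simp only: diff_zero)
  show ?thesis
    unfolding C2_near_with_hessian_def
    by (intro exI[of _ UNIV] exI[of _ "\<lambda>y. (-2 * eps) *\<^sub>R (y - p)"] exI[of _ "\<lambda>_. mat (-2 * eps)"]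
        conjI ballI open_UNIV UNIV_I grad hess continuous_on_const refl)
qed

lemma Qtilde_subharmonic_touched_by_concave_paraboloid:
  fixes w :: "real^'n \<Rightarrow> ereal"
  assumes "Qtilde_subharmonic \<Omega> w" "x0 \<in> \<Omega>" "eps > 0" "e > 0"
    and "\<forall>y\<in>ball x0 e. w y \<le> ereal (c - eps * norm (y - p)^2)"
    and "w x0 = ereal (c - eps * norm (x0 - p)^2)"
  shows "w x0 \<le> 0"
proof -
  let ?phi = "\<lambda>y. c - eps * norm (y - p)^2" and ?H = "mat (-2 * eps) :: real^'n^'n"
  have "(?phi x0, ?H) \<in> Jplus w x0"
    unfolding Jplus_def using C2_near_with_hessian_concave_paraboloid assms(4-6) by blast
  then have "(?phi x0, ?H) \<in> Qtilde"
    using assms(1,2) unfolding Qtilde_subharmonic_def by blast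
  then show ?thesis
    using assms(3,6) by (simp add: Qtilde_def lambda_max_mat)
qed

lemma Qtilde_subharmonic_perturbed_local_max:
  assumes "Qtilde_subharmonic \<Omega> w" "x0 \<in> \<Omega>" "eps > 0" "e > 0" "w x0 \<noteq> \<infinity>"
    and "\<forall>y\<in>ball x0 e. w y + ereal (eps * norm (y - p)^2) \<le> w x0 + ereal (eps * norm (x0 - p)^2)"
  shows "w x0 \<le> 0"
proof (cases "w x0")
  case (real a)
  define c where "c = a + eps * norm (x0 - p)^2"
  have "w y \<le> ereal (c - eps * norm (y - p)^2)" if "y \<in> ball x0 e" for y
  proof -
    have "w y + ereal (eps * norm (y - p)^2) \<le> ereal c"
      using assms(6) that by (simp add: real c_def)
    then show ?thesis by (cases "w y") auto
  qed
  moreover have "w x0 = ereal (c - eps * norm (x0 - p)^2)"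
    by (simp add: real c_def)
  ultimately show ?thesis
    using Qtilde_subharmonic_touched_by_concave_paraboloid[OF assms(1-4)] by blast
qed (use assms(5) in auto)

lemma Qtilde_subharmonic_perturbed_max_on_closure:
  assumes "Qtilde_subharmonic \<Omega> w" "open \<Omega>" "usc_on (closure \<Omega>) w"
    and "\<forall>x\<in>frontier \<Omega>. w x \<le> 0" "eps > 0" "x0 \<in> closure \<Omega>"
    and "\<forall>y\<in>closure \<Omega>. w y + ereal (eps * norm (y - p)^2) \<le> w x0 + ereal (eps * norm (x0 - p)^2)"
  shows "w x0 \<le> 0"
proof (cases "x0 \<in> \<Omega>")
  case True
  then obtain e where "e > 0" "ball x0 e \<subseteq> \<Omega>"
    using assms(2) open_contains_ball by blast
  moreover have "w x0 \<noteq> \<infinity>"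
    using assms(3,6) unfolding usc_on_def by blast
  ultimately show ?thesis
    using Qtilde_subharmonic_perturbed_local_max[OF assms(1) True \<open>eps > 0\<close>] assms(7) closure_subset
    by blast
next
  case False
  then show ?thesis
    using assms(2,4,6) by (simp add: frontier_def interior_open)
qed

theorem theorem4p1:
  fixes \<Omega> :: "(real^'n) set" and w :: "real^'n \<Rightarrow> ereal"
  assumes "bounded \<Omega>" and "open \<Omega>" and "connected \<Omega>"
    and "usc_on (closure \<Omega>) w"
    and "Qtilde_subharmonic \<Omega> w"
    and "\<forall>x\<in>frontier \<Omega>. w x \<le> 0"
  shows "\<forall>x\<in>\<Omega>. w x \<le> 0"
proof (rule ccontr)
  assume "\<not> ?thesis"
  then obtain x1 where x1: "x1 \<in> \<Omega>" "w x1 > 0" by (auto simp: not_le)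
  moreover have "w x1 \<noteq> \<infinity>"
    using assms(4) x1(1) closure_subset unfolding usc_on_def by blast
  ultimately obtain m where m: "w x1 = ereal m" "m > 0" by (cases "w x1") auto
  obtain eps where "eps > 0" and small: "\<forall>y\<in>closure \<Omega>. eps * norm (y - x1)^2 < m"
    using bounded_imp_scaled_norm_sq_less[OF bounded_closure[OF assms(1)] \<open>m > 0\<close>] by blast
  define u where "u y = w y + ereal (eps * norm (y - x1)^2)" for y
  have "usc_on (closure \<Omega>) u"
    unfolding u_def by (intro usc_on_add_continuous assms(4) continuous_intros)
  moreover have "compact (closure \<Omega>)" "closure \<Omega> \<noteq> {}"
    using assms(1) x1(1) closure_subset by (auto simp: compact_closure)
  ultimately obtain x0 where x0: "x0 \<in> closure \<Omega>" and max: "\<forall>y\<in>closure \<Omega>. u y \<le> u x0"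
    using usc_on_attains_max by blast
  have "w x0 \<le> 0"
    using Qtilde_subharmonic_perturbed_max_on_closure[OF assms(5,2,4,6) \<open>eps > 0\<close> x0] max
    unfolding u_def by blast
  then have "u x0 \<le> ereal (eps * norm (x0 - x1)^2)"
    unfolding u_def using add_right_mono by fastforce
  also have "\<dots> < ereal m"
    using small x0 by simp
  finally have "u x0 < u x1"
    using m by (simp add: u_def)
  moreover have "u x1 \<le> u x0"
    using max x1(1) closure_subset by blast
  ultimately show False by simp
qed

end
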